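(* Let $(X,d)$ be a complete metric space, $\lambda$ a convex mean on $X$ and $\nu$ a nonexpansive 2-mean on $X$. Then the iterated composition $\lambda*\nu$ (resp. the skewed iterated composition $\lambda*_s\nu$) exists and is nonexpansive.
   Context: A 2-mean is a map $\mu:X^2\to X$ with $\mu(x,x)=x$. A convex mean is a symmetric 2-mean $\lambda$ with $d(\lambda(x,z),\lambda(y,z))\le\frac12 d(x,y)$ for all $x,y,z$. Nonexpansive: $d(\nu(x_1,x_2),\nu(y_1,y_2))\le\max\{d(x_1,y_1),d(x_2,y_2)\}$. Iterated composition: set $\lambda_1=\lambda$, $\nu_1=\nu$, $\lambda_{n+1}(x,y)=\lambda(\lambda_n(x,y),\nu_n(x,y))$, $\nu_{n+1}(x,y)=\nu(\lambda_n(x,y),\nu_n(x,y))$; skewed iterated composition: $\nu_{n+1}(x,y)=\nu(\lambda_n(x,y),\nu_n(x,y))$, $\lambda_{n+1}(x,y)=\lambda(\lambda_n(x,y),\nu_{n+1}(x,y))$. If there is a 2-mean $\mu$ with $\lim_n\lambda_n(x,y)=\mu(x,y)=\lim_n\nu_n(x,y)$ for all $x,y$, then $\mu$ is the iterated composition $\lambda*\nu$ (resp. skewed iterated composition $\lambda*_s\nu$). *)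

theory Defs
  imports "HOL-Analysis.Analysis"
begin

definition mean2 :: "('a \<Rightarrow> 'a \<Rightarrow> 'a) \<Rightarrow> bool" where
  "mean2 mu \<longleftrightarrow> (\<forall>x. mu x x = x)"

definition convex_mean :: "('a::metric_space \<Rightarrow> 'a \<Rightarrow> 'a) \<Rightarrow> bool" where
  "convex_mean lam \<longleftrightarrow> mean2 lam \<and> (\<forall>x y. lam x y = lam y x) \<and>
     (\<forall>x y z. dist (lam x z) (lam y z) \<le> dist x y / 2)"

definition nonexpansive2 :: "('a::metric_space \<Rightarrow> 'a \<Rightarrow> 'a) \<Rightarrow> bool" where
  "nonexpansive2 nu \<longleftrightarrow> (\<forall>x1 x2 y1 y2.
     dist (nu x1 x2) (nu y1 y2) \<le> max (dist x1 y1) (dist x2 y2))"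

text \<open>Index shift: iter_pair lam nu n x y = (lambda_{n+1}(x,y), nu_{n+1}(x,y)).\<close>
fun iter_pair :: "('a \<Rightarrow> 'a \<Rightarrow> 'a) \<Rightarrow> ('a \<Rightarrow> 'a \<Rightarrow> 'a) \<Rightarrow> nat \<Rightarrow> 'a \<Rightarrow> 'a \<Rightarrow> 'a \<times> 'a" where
  "iter_pair lam nu 0 x y = (lam x y, nu x y)"
| "iter_pair lam nu (Suc n) x y =
     (let (l, v) = iter_pair lam nu n x y in (lam l v, nu l v))"

fun skew_iter_pair :: "('a \<Rightarrow> 'a \<Rightarrow> 'a) \<Rightarrow> ('a \<Rightarrow> 'a \<Rightarrow> 'a) \<Rightarrow> nat \<Rightarrow> 'a \<Rightarrow> 'a \<Rightarrow> 'a \<times> 'a" where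
  "skew_iter_pair lam nu 0 x y = (lam x y, nu x y)"
| "skew_iter_pair lam nu (Suc n) x y =
     (let (l, v) = skew_iter_pair lam nu n x y; v' = nu l v in (lam l v', v'))"

definition is_iter_comp :: "('a::metric_space \<Rightarrow> 'a \<Rightarrow> 'a) \<Rightarrow> ('a \<Rightarrow> 'a \<Rightarrow> 'a) \<Rightarrow> ('a \<Rightarrow> 'a \<Rightarrow> 'a) \<Rightarrow> bool" where
  "is_iter_comp lam nu mu \<longleftrightarrow> mean2 mu \<and> (\<forall>x y.
     (\<lambda>n. fst (iter_pair lam nu n x y)) \<longlonglongrightarrow> mu x y \<and>
     (\<lambda>n. snd (iter_pair lam nu n x y)) \<longlonglongrightarrow> mu x y)"

definition is_skew_iter_comp :: "('a::metric_space \<Rightarrow> 'a \<Rightarrow> 'a) \<Rightarrow> ('a \<Rightarrow> 'a \<Rightarrow> 'a) \<Rightarrow> ('a \<Rightarrow> 'a \<Rightarrow> 'a) \<Rightarrow> bool" where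
  "is_skew_iter_comp lam nu mu \<longleftrightarrow> mean2 mu \<and> (\<forall>x y.
     (\<lambda>n. fst (skew_iter_pair lam nu n x y)) \<longlonglongrightarrow> mu x y \<and>
     (\<lambda>n. snd (skew_iter_pair lam nu n x y)) \<longlonglongrightarrow> mu x y)"

end

theory Submission
  imports Defs
begin

(* Both schemes are iterations of (l, v) \<mapsto> (A l v, B l v) for nonexpansive 2-means A, B with
   d(A l v, l) \<le> d(l, v)/2 and d(A l v, B l v) \<le> d(l, v)/2. For the plain scheme A = \<lambda>, B = \<nu>,
   since \<lambda>(l, v) is within d(l, v)/2 of both l and v. The skewed scheme, shifted by one step,
   is the plain scheme for A l v = \<lambda>(l, \<nu>(l, v)) and B = \<nu>, because d(l, \<nu>(l, v)) \<le> d(l, v).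
   The gap d(l_n, v_n) halves at each step, so l_n moves by a summable amount, converges by
   completeness, and v_n has the same limit. Being a 2-mean and being nonexpansive are preserved
   by composition and pass to pointwise limits. *)

lemma Cauchy_if_summable_dist_Suc:
  fixes f :: "nat \<Rightarrow> 'a::metric_space"
  assumes "summable g" and dist_Suc: "\<And>n. dist (f n) (f (Suc n)) \<le> g n"
  shows "Cauchy f"
  unfolding Cauchy_altdef2
proof (intro allI impI)
  fix e :: real
  assume "e > 0"
  then obtain N where N: "\<And>n. n \<ge> N \<Longrightarrow> norm (\<Sum>i. g (i + n)) < e"
    using suminf_exist_split \<open>summable g\<close> by blast
  have g_nonneg: "0 \<le> g n" for n
    using dist_Suc[of n] zero_le_dist order_trans by blast
  have partial: "dist (f N) (f (N + k)) \<le> (\<Sum>i<k. g (i + N))" for k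
  proof (induction k)
    case (Suc k)
    have "dist (f N) (f (N + Suc k)) \<le> dist (f N) (f (N + k)) + dist (f (N + k)) (f (Suc (N + k)))"
      using dist_triangle by simp
    also have "\<dots> \<le> (\<Sum>i<Suc k. g (i + N))"
      using Suc dist_Suc[of "N + k"] by (simp add: add.commute)
    finally show ?case .
  qed simp
  have "dist (f n) (f N) < e" if "n \<ge> N" for n
  proof -
    have "dist (f N) (f (N + (n - N))) \<le> (\<Sum>i<n - N. g (i + N))"
      by (rule partial)
    also have "\<dots> \<le> (\<Sum>i. g (i + N))"
      using \<open>summable g\<close> g_nonneg
      by (intro sum_le_suminf summable_ignore_initial_segment) auto
    also have "\<dots> < e"
      using N[of N] by simp
    finally show ?thesis
      using that by (simp add: dist_commute)
  qed
  then show "\<exists>N. \<forall>n\<ge>N. dist (f n) (f N) < e"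
    by blast
qed

lemma common_limit_if_gap_halves:
  fixes l v :: "nat \<Rightarrow> 'a::complete_space"
  assumes step: "\<And>n. dist (l (Suc n)) (l n) \<le> dist (l n) (v n) / 2"
    and gap: "\<And>n. dist (l (Suc n)) (v (Suc n)) \<le> dist (l n) (v n) / 2"
  shows "\<exists>L. l \<longlonglongrightarrow> L \<and> v \<longlonglongrightarrow> L"
proof -
  define D where "D = dist (l 0) (v 0)"
  have gap_le: "dist (l n) (v n) \<le> D * (1 / 2) ^ n" for n
  proof (induction n)
    case (Suc n)
    have "dist (l (Suc n)) (v (Suc n)) \<le> dist (l n) (v n) / 2"
      by (rule gap)
    also have "\<dots> \<le> D * (1 / 2) ^ n / 2"
      using Suc by (rule divide_right_mono) simp
    finally show ?case
      by simp
  qed (simp add: D_def)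
  have "summable (\<lambda>n. D * (1 / 2) ^ n / 2)"
    by (intro summable_divide summable_mult summable_geometric) simp
  moreover have "dist (l n) (l (Suc n)) \<le> D * (1 / 2) ^ n / 2" for n
  proof -
    have "dist (l n) (l (Suc n)) \<le> dist (l n) (v n) / 2"
      using step[of n] by (simp only: dist_commute)
    also have "\<dots> \<le> D * (1 / 2) ^ n / 2"
      using gap_le[of n] by (rule divide_right_mono) simp
    finally show ?thesis .
  qed
  ultimately have "Cauchy l"
    by (rule Cauchy_if_summable_dist_Suc)
  then obtain L where L: "l \<longlonglongrightarrow> L"
    using Cauchy_convergent_iff convergent_def by blast
  have "(\<lambda>n. D * (1 / 2) ^ n) \<longlonglongrightarrow> 0"
    by (intro tendsto_mult_right_zero LIMSEQ_realpow_zero) simp_all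
  then have upper_lim: "(\<lambda>n. D * (1 / 2) ^ n + dist (l n) L) \<longlonglongrightarrow> 0"
    using L by (intro tendsto_add_zero) (simp_all only: tendsto_dist_iff[symmetric])
  have upper: "\<forall>n. dist (v n) L \<le> D * (1 / 2) ^ n + dist (l n) L"
    using dist_triangle3 gap_le by (meson add_le_cancel_right order_trans)
  have "(\<lambda>n. dist (v n) L) \<longlonglongrightarrow> 0"
    by (rule tendsto_sandwich[OF _ always_eventually[OF upper] tendsto_const upper_lim]) simp
  then have "v \<longlonglongrightarrow> L"
    by (rule tendsto_dist_iff[THEN iffD2])
  with L show ?thesis
    by blast
qed

lemma mean2_compose:
  assumes "mean2 f" and "mean2 g" and "mean2 h"
  shows "mean2 (\<lambda>x y. h (f x y) (g x y))"
  using assms unfolding mean2_def by simp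

lemma nonexpansive2_compose:
  assumes "nonexpansive2 f" and "nonexpansive2 g" and "nonexpansive2 h"
  shows "nonexpansive2 (\<lambda>x y. h (f x y) (g x y))"
  unfolding nonexpansive2_def
proof (intro allI)
  fix x1 x2 y1 y2
  have "dist (h (f x1 x2) (g x1 x2)) (h (f y1 y2) (g y1 y2))
      \<le> max (dist (f x1 x2) (f y1 y2)) (dist (g x1 x2) (g y1 y2))"
    using \<open>nonexpansive2 h\<close> unfolding nonexpansive2_def by blast
  also have "\<dots> \<le> max (dist x1 y1) (dist x2 y2)"
    using \<open>nonexpansive2 f\<close> \<open>nonexpansive2 g\<close> unfolding nonexpansive2_def by simp
  finally show "dist (h (f x1 x2) (g x1 x2)) (h (f y1 y2) (g y1 y2)) \<le> max (dist x1 y1) (dist x2 y2)" .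
qed

lemma mean2_pointwise_limit:
  fixes f :: "nat \<Rightarrow> 'a::metric_space \<Rightarrow> 'a \<Rightarrow> 'a"
  assumes "\<And>n. mean2 (f n)" and "\<And>x y. (\<lambda>n. f n x y) \<longlonglongrightarrow> mu x y"
  shows "mean2 mu"
  unfolding mean2_def
proof
  fix x
  have "(\<lambda>n. f n x x) = (\<lambda>n. x)"
    using assms(1) unfolding mean2_def by simp
  then have "(\<lambda>n. f n x x) \<longlonglongrightarrow> x"
    by (simp only: tendsto_const)
  with assms(2)[of x x] show "mu x x = x"
    by (rule LIMSEQ_unique)
qed

lemma nonexpansive2_pointwise_limit:
  fixes f :: "nat \<Rightarrow> 'a::metric_space \<Rightarrow> 'a \<Rightarrow> 'a"
  assumes "\<And>n. nonexpansive2 (f n)" and "\<And>x y. (\<lambda>n. f n x y) \<longlonglongrightarrow> mu x y"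
  shows "nonexpansive2 mu"
  unfolding nonexpansive2_def
proof (intro allI)
  fix x1 x2 y1 y2
  have lim: "(\<lambda>n. dist (f n x1 x2) (f n y1 y2)) \<longlonglongrightarrow> dist (mu x1 x2) (mu y1 y2)"
    using assms(2)[of x1 x2] assms(2)[of y1 y2] by (rule tendsto_dist)
  have bound: "\<forall>n. dist (f n x1 x2) (f n y1 y2) \<le> max (dist x1 y1) (dist x2 y2)"
    using assms(1) unfolding nonexpansive2_def by blast
  show "dist (mu x1 x2) (mu y1 y2) \<le> max (dist x1 y1) (dist x2 y2)"
    using tendsto_upperbound[OF lim always_eventually[OF bound]] by simp
qed

lemma iter_pair_Suc_unfold:
  "iter_pair lam nu (Suc n) x y =
     (lam (fst (iter_pair lam nu n x y)) (snd (iter_pair lam nu n x y)),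
      nu (fst (iter_pair lam nu n x y)) (snd (iter_pair lam nu n x y)))"
  by (simp add: split_beta)

lemma iter_pair_closed:
  assumes "P lam" and "P nu"
    and compose: "\<And>f g h. P f \<Longrightarrow> P g \<Longrightarrow> P h \<Longrightarrow> P (\<lambda>x y. h (f x y) (g x y))"
  shows "P (\<lambda>x y. fst (iter_pair lam nu n x y)) \<and> P (\<lambda>x y. snd (iter_pair lam nu n x y))"
proof (induction n)
  case (Suc n)
  then show ?case
    unfolding iter_pair_Suc_unfold fst_conv snd_conv using compose assms(1,2) by blast
qed (simp add: assms(1,2))

lemma iter_comp_exists_if_gap_halves:
  fixes lam nu :: "'a::complete_space \<Rightarrow> 'a \<Rightarrow> 'a"
  assumes "mean2 lam" and "mean2 nu" and "nonexpansive2 lam" and "nonexpansive2 nu"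
    and step: "\<And>x y. dist (lam x y) x \<le> dist x y / 2"
    and gap: "\<And>x y. dist (lam x y) (nu x y) \<le> dist x y / 2"
  shows "\<exists>mu. is_iter_comp lam nu mu \<and> nonexpansive2 mu"
proof -
  have "\<exists>L. (\<lambda>n. fst (iter_pair lam nu n x y)) \<longlonglongrightarrow> L \<and> (\<lambda>n. snd (iter_pair lam nu n x y)) \<longlonglongrightarrow> L"
    for x y
    by (rule common_limit_if_gap_halves) (simp_all only: iter_pair_Suc_unfold fst_conv snd_conv step gap)
  then obtain mu where lim:
    "\<And>x y. (\<lambda>n. fst (iter_pair lam nu n x y)) \<longlonglongrightarrow> mu x y"
    "\<And>x y. (\<lambda>n. snd (iter_pair lam nu n x y)) \<longlonglongrightarrow> mu x y"
    by metis
  have "mean2 (\<lambda>x y. fst (iter_pair lam nu n x y))" for n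
    using iter_pair_closed[of mean2 lam nu n] assms(1,2) mean2_compose by blast
  then have "mean2 mu"
    using lim(1) by (rule mean2_pointwise_limit)
  moreover have "nonexpansive2 (\<lambda>x y. fst (iter_pair lam nu n x y))" for n
    using iter_pair_closed[of nonexpansive2 lam nu n] assms(3,4) nonexpansive2_compose by blast
  then have "nonexpansive2 mu"
    using lim(1) by (rule nonexpansive2_pointwise_limit)
  ultimately show ?thesis
    unfolding is_iter_comp_def using lim by blast
qed

lemma convex_mean_dist_left:
  assumes "convex_mean lam"
  shows "dist (lam x y) x \<le> dist x y / 2"
  using assms unfolding convex_mean_def mean2_def by (metis dist_commute)

lemma convex_mean_dist_right:
  assumes "convex_mean lam"
  shows "dist (lam x y) y \<le> dist x y / 2"
  using assms unfolding convex_mean_def mean2_def by metis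

lemma convex_mean_nonexpansive2:
  assumes "convex_mean lam"
  shows "nonexpansive2 lam"
  unfolding nonexpansive2_def
proof (intro allI)
  fix x1 x2 y1 y2
  have contract: "dist (lam x z) (lam y z) \<le> dist x y / 2" for x y z
    using assms unfolding convex_mean_def by blast
  have "dist (lam x1 x2) (lam y1 y2) \<le> dist (lam x1 x2) (lam y1 x2) + dist (lam y1 x2) (lam y1 y2)"
    by (rule dist_triangle)
  also have "\<dots> \<le> dist x1 y1 / 2 + dist x2 y2 / 2"
    using contract[of x1 y1 x2] contract[of x2 y2 y1] assms
    unfolding convex_mean_def by (metis add_mono)
  finally show "dist (lam x1 x2) (lam y1 y2) \<le> max (dist x1 y1) (dist x2 y2)"
    by linarith
qed

lemma nonexpansive2_mean_dist_le:
  assumes "mean2 nu" and "nonexpansive2 nu"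
  shows "dist (nu x y) z \<le> max (dist x z) (dist y z)"
  using assms unfolding mean2_def nonexpansive2_def by metis

lemma iter_comp_exists:
  fixes lam nu :: "'a::complete_space \<Rightarrow> 'a \<Rightarrow> 'a"
  assumes "convex_mean lam" and "mean2 nu" and "nonexpansive2 nu"
  shows "\<exists>mu. is_iter_comp lam nu mu \<and> nonexpansive2 mu"
proof (rule iter_comp_exists_if_gap_halves)
  show "mean2 lam"
    using assms(1) unfolding convex_mean_def by blast
  show "nonexpansive2 lam"
    using assms(1) by (rule convex_mean_nonexpansive2)
  show "dist (lam x y) x \<le> dist x y / 2" for x y
    using assms(1) by (rule convex_mean_dist_left)
  show "dist (lam x y) (nu x y) \<le> dist x y / 2" for x y
    using nonexpansive2_mean_dist_le[OF assms(2,3), of x y "lam x y"]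
      convex_mean_dist_left[OF assms(1), of x y] convex_mean_dist_right[OF assms(1), of x y]
    by (simp add: dist_commute)
qed (use assms in auto)

lemma skew_iter_pair_Suc_eq_iter_pair:
  "skew_iter_pair lam nu (Suc n) x y = iter_pair (\<lambda>l v. lam l (nu l v)) nu n (lam x y) (nu x y)"
  by (induction n) (simp_all add: split_beta Let_def)

lemma skew_iter_comp_exists:
  fixes lam nu :: "'a::complete_space \<Rightarrow> 'a \<Rightarrow> 'a"
  assumes "convex_mean lam" and "mean2 nu" and "nonexpansive2 nu"
  shows "\<exists>mu. is_skew_iter_comp lam nu mu \<and> nonexpansive2 mu"
proof -
  have "mean2 lam" and "nonexpansive2 lam"
    using assms(1) convex_mean_nonexpansive2 unfolding convex_mean_def by blast+
  have "mean2 (\<lambda>x y. x)" and "nonexpansive2 (\<lambda>x y. x)"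
    unfolding mean2_def nonexpansive2_def by simp_all
  have nu_closer: "dist l (nu l v) \<le> dist l v" for l v
    using nonexpansive2_mean_dist_le[OF assms(2,3), of l v l] by (simp add: dist_commute)
  have "\<exists>mu'. is_iter_comp (\<lambda>l v. lam l (nu l v)) nu mu' \<and> nonexpansive2 mu'"
  proof (rule iter_comp_exists_if_gap_halves)
    show "mean2 (\<lambda>l v. lam l (nu l v))"
      using mean2_compose[OF \<open>mean2 (\<lambda>x y. x)\<close> assms(2) \<open>mean2 lam\<close>] .
    show "nonexpansive2 (\<lambda>l v. lam l (nu l v))"
      using nonexpansive2_compose[OF \<open>nonexpansive2 (\<lambda>x y. x)\<close> assms(3) \<open>nonexpansive2 lam\<close>] .
    show "dist (lam l (nu l v)) l \<le> dist l v / 2" for l v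
      using convex_mean_dist_left[OF assms(1), of l "nu l v"] nu_closer[of l v] by linarith
    show "dist (lam l (nu l v)) (nu l v) \<le> dist l v / 2" for l v
      using convex_mean_dist_right[OF assms(1), of l "nu l v"] nu_closer[of l v] by linarith
  qed (use assms in auto)
  then obtain mu' where mu': "is_iter_comp (\<lambda>l v. lam l (nu l v)) nu mu'" "nonexpansive2 mu'"
    by blast
  define mu where "mu x y = mu' (lam x y) (nu x y)" for x y
  have "(\<lambda>n. fst (skew_iter_pair lam nu n x y)) \<longlonglongrightarrow> mu x y \<and>
        (\<lambda>n. snd (skew_iter_pair lam nu n x y)) \<longlonglongrightarrow> mu x y" for x y
  proof -
    have "(\<lambda>n. fst (skew_iter_pair lam nu (Suc n) x y)) \<longlonglongrightarrow> mu x y \<and>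
          (\<lambda>n. snd (skew_iter_pair lam nu (Suc n) x y)) \<longlonglongrightarrow> mu x y"
      using mu'(1) unfolding is_iter_comp_def mu_def skew_iter_pair_Suc_eq_iter_pair by blast
    then show ?thesis
      by (blast intro: LIMSEQ_imp_Suc)
  qed
  moreover have "mean2 mu"
    using mu'(1) \<open>mean2 lam\<close> assms(2) unfolding is_iter_comp_def mu_def
    by (blast intro: mean2_compose)
  moreover have "nonexpansive2 mu"
    using mu'(2) \<open>nonexpansive2 lam\<close> assms(3) unfolding mu_def
    by (blast intro: nonexpansive2_compose)
  ultimately show ?thesis
    unfolding is_skew_iter_comp_def by blast
qed

theorem proposition6p3:
  fixes lam nu :: "'a::complete_space \<Rightarrow> 'a \<Rightarrow> 'a"
  assumes "convex_mean lam" and "mean2 nu" and "nonexpansive2 nu"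
  shows "(\<exists>mu. is_iter_comp lam nu mu \<and> nonexpansive2 mu) \<and>
         (\<exists>mu. is_skew_iter_comp lam nu mu \<and> nonexpansive2 mu)"
  using iter_comp_exists[OF assms] skew_iter_comp_exists[OF assms] ..

end
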